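(* Let $(A,+,\circ)$ be a finite left brace whose additive group $(A,+)$ is cyclic, let $X$ be a transitive cycle base of $A$ and let $g\in X$. Then $g$ generates the additive group $(A,+)$.
   Context: A left brace is a set $A$ with two operations such that $(A,+)$ is an abelian group, $(A,\circ)$ is a group, and $a\circ(b+c)=a\circ b-a+a\circ c$ for all $a,b,c$. For $a\in A$, $\lambda_a(b):=-a+a\circ b$; $a\mapsto\lambda_a$ is a homomorphism $(A,\circ)\to\mathrm{Aut}(A,+)$, giving an action of $(A,\circ)$ on $A$. A transitive cycle base is a subset of $A$ which is a single orbit of this action and which generates $(A,+)$. *)

theory Defs
  imports Main
begin

text \<open>The brace is modelled on the whole of a type 'a of class ab_group_add
  (the additive group (A,+)); the second operation circ is an arbitrary binary operation.\<close>

definition is_group_op :: "('a \<Rightarrow> 'a \<Rightarrow> 'a) \<Rightarrow> bool" where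
  "is_group_op circ \<longleftrightarrow>
     (\<forall>a b c. circ (circ a b) c = circ a (circ b c)) \<and>
     (\<exists>e. (\<forall>a. circ e a = a \<and> circ a e = a) \<and> (\<forall>a. \<exists>b. circ a b = e \<and> circ b a = e))"

definition left_brace :: "('a::ab_group_add \<Rightarrow> 'a \<Rightarrow> 'a) \<Rightarrow> bool" where
  "left_brace circ \<longleftrightarrow> is_group_op circ \<and>
     (\<forall>a b c. circ a (b + c) = circ a b - a + circ a c)"

definition brace_lambda :: "('a::ab_group_add \<Rightarrow> 'a \<Rightarrow> 'a) \<Rightarrow> 'a \<Rightarrow> 'a \<Rightarrow> 'a" where
  "brace_lambda circ a b = - a + circ a b"

definition add_span :: "'a::ab_group_add set \<Rightarrow> 'a set" where
  "add_span S = \<Inter>{H. 0 \<in> H \<and> (\<forall>x\<in>H. \<forall>y\<in>H. x + y \<in> H) \<and> (\<forall>x\<in>H. - x \<in> H) \<and> S \<subseteq> H}"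

definition add_cyclic :: "'a::ab_group_add itself \<Rightarrow> bool" where
  "add_cyclic _ \<longleftrightarrow> (\<exists>g::'a. add_span {g} = UNIV)"

definition transitive_cycle_base :: "('a::ab_group_add \<Rightarrow> 'a \<Rightarrow> 'a) \<Rightarrow> 'a set \<Rightarrow> bool" where
  "transitive_cycle_base circ X \<longleftrightarrow>
     (\<exists>x. X = {brace_lambda circ a x | a. True}) \<and> add_span X = UNIV"

end

theory Submission
  imports Defs
begin

(* Every lambda_a is an additive endomorphism of A, and an endomorphism of a cyclic
   group is multiplication by a fixed integer; hence lambda_a y lies in the cyclic subgroup
   generated by y. Since X is an orbit, its base point is lambda_b g for some b, so it lies
   in the subgroup generated by g, and then so does all of X. As X generates A, so does g. *)

primrec nat_multiple :: "nat \<Rightarrow> 'a::ab_group_add \<Rightarrow> 'a" where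
  "nat_multiple 0 g = 0"
| "nat_multiple (Suc n) g = g + nat_multiple n g"

lemma nat_multiple_add_left: "nat_multiple (n + m) g = nat_multiple n g + nat_multiple m g"
  by (induction n) (auto simp: algebra_simps)

lemma nat_multiple_diff_right:
  "nat_multiple n (a - b) = nat_multiple n a - nat_multiple n b"
  by (induction n) (auto simp: algebra_simps)

lemma nat_multiple_commute:
  "nat_multiple n (nat_multiple k g) = nat_multiple k (nat_multiple n g)"
proof -
  have "nat_multiple n (nat_multiple k g) = nat_multiple (n * k) g" for n k
    by (induction n) (auto simp: nat_multiple_add_left)
  then show ?thesis by (metis mult.commute)
qed

lemma add_span_subset:
  assumes "S \<subseteq> add_span T"
  shows "add_span S \<subseteq> add_span T"
  using assms unfolding add_span_def by blast

lemma add_span_singleton: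
  "add_span {g} = {nat_multiple n g - nat_multiple m g | n m. True}" (is "_ = ?T")
proof
  have "0 \<in> ?T" by (metis (mono_tags) CollectI diff_self)
  moreover have "g \<in> ?T"
    by (rule CollectI, rule exI[of _ 1], rule exI[of _ 0]) simp
  moreover have "x + y \<in> ?T" if "x \<in> ?T" and "y \<in> ?T" for x y
  proof -
    obtain n m n' m' where x: "x = nat_multiple n g - nat_multiple m g"
      and y: "y = nat_multiple n' g - nat_multiple m' g"
      using \<open>x \<in> ?T\<close> \<open>y \<in> ?T\<close> by blast
    have "x + y = nat_multiple (n + n') g - nat_multiple (m + m') g"
      unfolding x y by (simp add: nat_multiple_add_left algebra_simps)
    then show ?thesis by blast
  qed
  moreover have "- x \<in> ?T" if hx: "x \<in> ?T" for x
  proof -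
    obtain n m where "x = nat_multiple n g - nat_multiple m g" using hx by blast
    then have "- x = nat_multiple m g - nat_multiple n g" by simp
    then show ?thesis by blast
  qed
  ultimately show "add_span {g} \<subseteq> ?T"
    unfolding add_span_def by (intro Inter_lower) blast
next
  show "?T \<subseteq> add_span {g}"
  proof (clarsimp simp: add_span_def)
    fix n m H
    assume H: "0 \<in> H" "\<forall>x\<in>H. \<forall>y\<in>H. x + y \<in> H" "\<forall>x\<in>H. - x \<in> H" "g \<in> H"
    have "nat_multiple k g \<in> H" for k by (induction k) (use H in auto)
    with H show "nat_multiple n g - nat_multiple m g \<in> H"
      by (metis diff_conv_add_uminus)
  qed
qed

lemma additive_nat_multiple:
  assumes "\<And>x y. \<phi> (x + y) = \<phi> x + \<phi> y"
  shows "\<phi> (nat_multiple n h) = nat_multiple n (\<phi> h)"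
proof -
  have "\<phi> 0 = 0" using assms[of 0 0] by simp
  then show ?thesis by (induction n) (auto simp: assms)
qed

lemma additive_diff:
  fixes \<phi> :: "'a::ab_group_add \<Rightarrow> 'b::ab_group_add"
  assumes "\<And>x y. \<phi> (x + y) = \<phi> x + \<phi> y"
  shows "\<phi> (a - b) = \<phi> a - \<phi> b"
  using assms[of "a - b" b] by (simp add: algebra_simps)

lemma additive_endomorphism_in_add_span_of_cyclic:
  fixes \<phi> :: "'a::ab_group_add \<Rightarrow> 'a" and h y :: 'a
  assumes additive: "\<And>x y. \<phi> (x + y) = \<phi> x + \<phi> y"
    and cyclic: "add_span {h} = UNIV"
  shows "\<phi> y \<in> add_span {y}"
proof -
  obtain p q where y: "y = nat_multiple p h - nat_multiple q h"
    using cyclic unfolding add_span_singleton by blast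
  obtain r s where \<phi>h: "\<phi> h = nat_multiple r h - nat_multiple s h"
    using cyclic unfolding add_span_singleton by blast
  have "\<phi> y = nat_multiple p (\<phi> h) - nat_multiple q (\<phi> h)"
    unfolding y additive_diff[OF additive] additive_nat_multiple[OF additive] ..
  also have "\<dots> = nat_multiple r y - nat_multiple s y"
    unfolding \<phi>h y nat_multiple_diff_right nat_multiple_commute[of p] nat_multiple_commute[of q]
    by (simp add: algebra_simps)
  finally show ?thesis unfolding add_span_singleton by blast
qed

lemma left_brace_zero_is_identity:
  assumes "left_brace circ"
  shows "circ 0 a = a" "circ a 0 = a"
proof -
  obtain e where e: "\<And>a. circ e a = a \<and> circ a e = a"
    using assms unfolding left_brace_def is_group_op_def by blast
  have "circ e (0 + 0) = circ e 0 - e + circ e 0"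
    using assms unfolding left_brace_def by blast
  then have "e = 0" using e[of 0] by simp
  then show "circ 0 a = a" "circ a 0 = a" using e by auto
qed

lemma brace_lambda_add:
  assumes "left_brace circ"
  shows "brace_lambda circ a (y + z) = brace_lambda circ a y + brace_lambda circ a z"
  using assms unfolding left_brace_def brace_lambda_def by (simp add: algebra_simps)

lemma brace_lambda_circ:
  assumes "left_brace circ"
  shows "brace_lambda circ a (brace_lambda circ b c) = brace_lambda circ (circ a b) c"
proof -
  have assoc: "circ (circ a b) c = circ a (circ b c)"
    and dist: "\<And>y z. circ a (y + z) = circ a y - a + circ a z"
    using assms unfolding left_brace_def is_group_op_def by blast+
  have "circ a b - a + circ a (- b) = a"
    using dist[of b "- b"] left_brace_zero_is_identity(2)[OF assms] by simp
  then have "circ a (- b) = a + a - circ a b"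
    by (simp add: algebra_simps)
  then have "circ a (- b + circ b c) = a - circ a b + circ (circ a b) c"
    unfolding dist assoc by (simp add: algebra_simps)
  then show ?thesis
    unfolding brace_lambda_def by (simp add: algebra_simps)
qed

lemma brace_lambda_invertible:
  assumes "left_brace circ"
  obtains b where "brace_lambda circ b (brace_lambda circ a y) = y"
proof -
  obtain b where "circ b a = 0"
    using assms left_brace_zero_is_identity[OF assms]
    unfolding left_brace_def is_group_op_def by metis
  then have "brace_lambda circ b (brace_lambda circ a y) = y"
    using brace_lambda_circ[OF assms] left_brace_zero_is_identity[OF assms]
    by (simp add: brace_lambda_def)
  then show thesis by (rule that)
qed

lemma brace_lambda_in_add_span_of_cyclic:
  assumes "left_brace circ" and "add_cyclic TYPE('a::ab_group_add)"
  shows "brace_lambda circ b (y::'a) \<in> add_span {y}"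
proof -
  obtain h :: 'a where "add_span {h} = UNIV"
    using assms(2) unfolding add_cyclic_def by blast
  then show ?thesis
    by (rule additive_endomorphism_in_add_span_of_cyclic[OF brace_lambda_add[OF assms(1)]])
qed

theorem mainTheorem2:
  fixes circ :: "'a::{ab_group_add, finite} \<Rightarrow> 'a \<Rightarrow> 'a"
    and X :: "'a set" and g :: 'a
  assumes "left_brace circ"
    and "add_cyclic TYPE('a)"
    and "transitive_cycle_base circ X"
    and "g \<in> X"
  shows "add_span {g} = UNIV"
proof -
  obtain x where X: "X = {brace_lambda circ a x | a. True}" and "add_span X = UNIV"
    using assms(3) unfolding transitive_cycle_base_def by blast
  obtain a where "g = brace_lambda circ a x" using assms(4) X by blast
  then obtain b where "x = brace_lambda circ b g"
    using brace_lambda_invertible[OF assms(1)] by metis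
  then have "add_span {x} \<subseteq> add_span {g}"
    using brace_lambda_in_add_span_of_cyclic[OF assms(1,2)] by (simp add: add_span_subset)
  moreover have "add_span X \<subseteq> add_span {x}"
    using X brace_lambda_in_add_span_of_cyclic[OF assms(1,2)] by (intro add_span_subset) blast
  ultimately show ?thesis using \<open>add_span X = UNIV\<close> by blast
qed

end
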